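(* There is an absolute constant $K$ such that for every integer $c \ge 0$ there is a deterministic finite automaton over the alphabet $\{0,1\}\times\{0,1\}$, reading its input most significant digit first, with at most $K\max(1,\log c)$ states (not counting a dead state), which accepts a word $x \times y$ (with $x,y$ valid Fibonacci representations of the same length) if and only if $[x] + c = [y]$.
   Context: Fibonacci numbers: $F_0=0$, $F_1=1$, $F_k=F_{k-1}+F_{k-2}$. For a binary word $x = x_1\cdots x_\ell$, $[x] = \sum_{j=1}^{\ell} x_j F_{\ell-j+2}$. A valid Fibonacci representation is a binary word with no factor $11$; leading zeros are allowed. For words $x=x_1\cdots x_\ell$, $y=y_1\cdots y_\ell$ of equal length, $x\times y$ denotes the word $(x_1,y_1)\cdots(x_\ell,y_\ell)$ over $\{0,1\}^2$; the shorter of two representations is padded with leading zeros. Transition functions may be partial; a dead state (from which no accepting state is reachable) is not counted. *)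

theory Defs
  imports Complex_Main "HOL-Number_Theory.Fib"
begin

text \<open>Binary words are bool lists (True = digit 1), most significant digit first.
  Value: [x] = sum_{j=1}^{l} x_j F_{l-j+2}; with 0-based index j this is F_{l-j+1}.\<close>
definition fibval :: "bool list \<Rightarrow> nat" where
  "fibval x = (\<Sum>j<length x. if x ! j then fib (length x - j + 1) else 0)"

definition valid_fib :: "bool list \<Rightarrow> bool" where
  "valid_fib x \<longleftrightarrow> (\<forall>i. Suc i < length x \<longrightarrow> \<not> (x ! i \<and> x ! Suc i))"

fun dfa_run :: "('q \<Rightarrow> 'a \<Rightarrow> 'q option) \<Rightarrow> 'q \<Rightarrow> 'a list \<Rightarrow> 'q option" where
  "dfa_run \<delta> q [] = Some q"
| "dfa_run \<delta> q (a # w) = (case \<delta> q a of None \<Rightarrow> None | Some q' \<Rightarrow> dfa_run \<delta> q' w)"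

definition dfa_accepts :: "('q \<Rightarrow> 'a \<Rightarrow> 'q option) \<Rightarrow> 'q \<Rightarrow> 'q set \<Rightarrow> 'a list \<Rightarrow> bool" where
  "dfa_accepts \<delta> q0 F w \<longleftrightarrow> (\<exists>q. dfa_run \<delta> q0 w = Some q \<and> q \<in> F)"

text \<open>A dead state need not be included
  since transitions are partial; hence card Q counts the states without a dead state.\<close>
definition is_dfa :: "'q set \<Rightarrow> 'q \<Rightarrow> ('q \<Rightarrow> 'a \<Rightarrow> 'q option) \<Rightarrow> 'q set \<Rightarrow> bool" where
  "is_dfa Q q0 \<delta> F \<longleftrightarrow> finite Q \<and> q0 \<in> Q \<and> F \<subseteq> Q \<and>
     (\<forall>q\<in>Q. \<forall>a q'. \<delta> q a = Some q' \<longrightarrow> q' \<in> Q)"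

end

theory Submission
  imports Defs "HOL-Library.Countable"
begin

(* After prefixes u and v, the pair of differences
   ([v] - [u], [v]' - [u]'), where [.]' (fibval_shift) weights the digits by F_k instead
   of F_(k+1), evolves by an integer recurrence, and the word is accepted iff its first
   coordinate ends at c. Every state (a, b) on the run of a solution satisfies
   |a - phi b| <= 2 phi, and since the remaining r digits have value below F_(r+2), also
   c ~ a phi^r. Hence a lies within a bounded distance of c / phi^r for some
   r <= log_phi c, and b within a bounded distance of a / phi: restricting the automaton
   to these O(log c) states and sending all other transitions to the dead state does not
   change the language. *)

definition guarded_step :: "('q \<Rightarrow> 'a \<Rightarrow> 'q) \<Rightarrow> 'q set \<Rightarrow> 'q \<Rightarrow> 'a \<Rightarrow> 'q option" where
  "guarded_step f Q q a = (if f q a \<in> Q then Some (f q a) else None)"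

lemma dfa_run_guarded_step:
  assumes "q \<in> Q"
  shows "dfa_run (guarded_step f Q) q w =
    (if \<forall>i \<le> length w. foldl f q (take i w) \<in> Q then Some (foldl f q w) else None)"
  using assms
proof (induction w arbitrary: q)
  case (Cons a w)
  have "(\<forall>i \<le> length (a # w). foldl f q (take i (a # w)) \<in> Q) \<longleftrightarrow>
        f q a \<in> Q \<and> (\<forall>i \<le> length w. foldl f (f q a) (take i w) \<in> Q)"
    using Cons.prems by (auto simp: take_Cons split: nat.splits)
  with Cons show ?case by (auto simp: guarded_step_def)
qed simp

lemma is_dfa_guarded_step:
  "finite Q \<Longrightarrow> q0 \<in> Q \<Longrightarrow> F \<subseteq> Q \<Longrightarrow> is_dfa Q q0 (guarded_step f Q) F"
  unfolding is_dfa_def guarded_step_def by (auto split: if_splits)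

lemma dfa_run_to_nat:
  "dfa_run (\<lambda>n a. map_option to_nat (\<delta> (from_nat n) a)) (to_nat q) w = map_option to_nat (dfa_run \<delta> q w)"
  by (induction w arbitrary: q) (auto split: option.split)

lemma ex_nat_dfa:
  fixes \<delta> :: "'q::countable \<Rightarrow> 'a \<Rightarrow> 'q option"
  assumes "is_dfa Q q0 \<delta> F"
  shows "\<exists>(Q' :: nat set) q0' \<delta>' F'. is_dfa Q' q0' \<delta>' F' \<and> card Q' = card Q \<and>
           dfa_accepts \<delta>' q0' F' = dfa_accepts \<delta> q0 F"
proof (intro exI conjI)
  let ?\<delta> = "\<lambda>n a. map_option to_nat (\<delta> (from_nat n) a)"
  show "is_dfa (to_nat ` Q) (to_nat q0) ?\<delta> (to_nat ` F)"
    using assms unfolding is_dfa_def by auto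
  show "card (to_nat ` Q) = card Q" by (simp add: card_image)
  show "dfa_accepts ?\<delta> (to_nat q0) (to_nat ` F) = dfa_accepts \<delta> q0 F"
    by (auto simp: fun_eq_iff dfa_accepts_def dfa_run_to_nat)
qed

definition fibval_shift :: "bool list \<Rightarrow> nat" where
  "fibval_shift x = (\<Sum>j<length x. if x ! j then fib (length x - j) else 0)"

lemma fibval_Nil [simp]: "fibval [] = 0"
  and fibval_shift_Nil [simp]: "fibval_shift [] = 0"
  by (simp_all add: fibval_def fibval_shift_def)

lemma fibval_Cons: "fibval (e # x) = (if e then fib (length x + 2) else 0) + fibval x"
  unfolding fibval_def
  by (auto simp: lessThan_Suc_eq_insert_0 sum.reindex numeral_2_eq_2 intro!: sum.cong arg_cong[where f=fib])

lemma fibval_shift_Cons: "fibval_shift (e # x) = (if e then fib (length x + 1) else 0) + fibval_shift x"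
  unfolding fibval_shift_def
  by (auto simp: lessThan_Suc_eq_insert_0 sum.reindex intro!: sum.cong arg_cong[where f=fib])

lemma fibval_append:
  "fibval (x @ z) = fibval x * fib (length z + 1) + fibval_shift x * fib (length z) + fibval z"
proof (induction x)
  case (Cons e x)
  have "fib (length x + length z + 2) = fib (length x + 2) * fib (length z + 1) + fib (length x + 1) * fib (length z)"
    using fib_add[of "length x + 1" "length z"] by (simp add: ac_simps)
  then show ?case using Cons by (simp add: fibval_Cons fibval_shift_Cons algebra_simps)
qed simp

lemma fibval_snoc: "fibval (x @ [e]) = fibval x + fibval_shift x + of_bool e"
  by (simp add: fibval_append fibval_Cons)

lemma fibval_shift_snoc: "fibval_shift (x @ [e]) = fibval x + of_bool e"
proof -
  have "fibval_shift (x @ [e]) = (\<Sum>j<length x. if x ! j then fib (length x - j + 1) else 0) + of_bool e"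
    unfolding fibval_shift_def by (auto simp: nth_append intro!: sum.cong arg_cong[where f=fib])
  then show ?thesis unfolding fibval_def by simp
qed

lemma valid_fib_Nil [simp]: "valid_fib []"
  and valid_fib_single [simp]: "valid_fib [e]"
  by (simp_all add: valid_fib_def)

lemma valid_fib_Cons_Cons [simp]: "valid_fib (e # f # x) \<longleftrightarrow> \<not> (e \<and> f) \<and> valid_fib (f # x)"
  unfolding valid_fib_def by (auto simp: nth_Cons split: nat.splits)

lemma valid_fib_drop: "valid_fib x \<Longrightarrow> valid_fib (drop i x)"
  unfolding valid_fib_def by auto

lemma fibval_less_fib: "valid_fib x \<Longrightarrow> fibval x < fib (length x + 2)"
proof (induction x rule: induct_list012)
  case (3 e f x)
  let ?n = "length x"
  have fib_step: "fib (?n + 4) = fib (?n + 3) + fib (?n + 2)"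
    using fib_plus_2[of "?n + 2"] by (simp add: numeral_Bit0 numeral_3_eq_3)
  show ?case
  proof (cases e)
    case False
    have "fibval (f # x) < fib (?n + 3)" using 3 by (simp add: numeral_3_eq_3)
    with False fib_step show ?thesis by (simp add: fibval_Cons numeral_Bit0 numeral_3_eq_3)
  next
    case True
    have "\<not> f" using "3.prems" True by simp
    moreover have "valid_fib x" using valid_fib_drop[OF "3.prems", of 2] by simp
    ultimately show ?thesis using "3.IH"(1) fib_step True
      by (simp add: fibval_Cons numeral_Bit0 numeral_3_eq_3)
  qed
qed (simp_all add: fibval_Cons numeral_3_eq_3)

definition \<phi> :: real where "\<phi> = (1 + sqrt 5) / 2"

lemma phi_squared: "\<phi> * \<phi> = \<phi> + 1"
  unfolding \<phi>_def by (simp add: field_simps)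

lemma phi_mult_phi_mult: "\<phi> * (\<phi> * y) = \<phi> * y + y"
  by (simp add: phi_squared distrib_right flip: mult.assoc)

lemma one_less_phi: "1 < \<phi>"
  unfolding \<phi>_def by simp

lemma phi_less_5_3: "\<phi> < 5 / 3"
proof -
  have "sqrt 5 < sqrt ((7 / 3)\<^sup>2)" by (intro real_sqrt_less_mono) (simp add: power2_eq_square)
  then show ?thesis unfolding \<phi>_def by simp
qed

lemma phi_power_Suc: "\<phi> ^ Suc n = \<phi> * fib (Suc n) + fib n"
proof (induction n)
  case (Suc n)
  have "\<phi> ^ Suc (Suc n) = \<phi> * \<phi> * fib (Suc n) + \<phi> * fib n" using Suc by (simp add: algebra_simps)
  also have "\<dots> = \<phi> * fib (Suc (Suc n)) + fib (Suc n)" by (simp add: phi_squared algebra_simps)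
  finally show ?case .
qed simp

lemma fib_Suc_le_phi_power: "fib (Suc n) \<le> \<phi> ^ n"
proof (induction n rule: fib.induct)
  case (3 n)
  have "real (fib (Suc (Suc (Suc n)))) = fib (Suc (Suc n)) + fib (Suc n)" by simp
  also have "\<dots> \<le> \<phi> ^ Suc n + \<phi> ^ n" using 3 by simp
  also have "\<dots> = \<phi> ^ Suc (Suc n)" by (simp add: algebra_simps phi_mult_phi_mult)
  finally show ?case .
qed (use one_less_phi in simp_all)

lemma abs_fibval_minus_phi_shift_le: "\<bar>fibval x - \<phi> * fibval_shift x\<bar> \<le> \<phi>"
proof (induction x rule: rev_induct)
  case (snoc e x)
  define d where "d = fibval x - \<phi> * fibval_shift x"
  have "fibval (x @ [e]) - \<phi> * fibval_shift (x @ [e]) = (1 - \<phi>) * (d + of_bool e)"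
    unfolding fibval_snoc fibval_shift_snoc d_def by (simp add: algebra_simps phi_mult_phi_mult)
  also have "\<bar>\<dots>\<bar> \<le> (\<phi> - 1) * (\<phi> + 1)"
    using snoc one_less_phi unfolding d_def abs_mult by (intro mult_mono) auto
  also have "\<dots> = \<phi>" using phi_squared by (simp add: algebra_simps)
  finally show ?case .
qed (use one_less_phi in simp)

(* The two conditions diff_state_viable establishes for every state on the run of a
   solution; the second holds because the r digits still to be read have value below
   F_(r+2) (fibval_less_fib). *)
definition viable :: "nat \<Rightarrow> (int \<times> int) set" where
  "viable c = {(a, b). \<bar>a - \<phi> * b\<bar> \<le> 2 * \<phi> \<and>
     (\<exists>r. \<bar>real c - a * fib (Suc r) - b * fib r\<bar> < fib (r + 2))}"

lemma less_fib_add_2: "n < fib (n + 2)"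
proof (induction n)
  case (Suc n)
  have "0 < fib (Suc n)" by (simp add: fib_neq_0_nat)
  with Suc show ?case by (simp add: fib_plus_2[of "Suc n"])
qed simp

lemma zero_viable: "(0, 0) \<in> viable c"
  unfolding viable_def using less_fib_add_2[of c] one_less_phi by (auto intro!: exI[of _ c])

lemma viable_near_line:
  assumes "(a, b) \<in> viable c"
  shows "\<exists>r. \<bar>c / \<phi> ^ r - a\<bar> < 5 \<and> \<bar>b - a / \<phi>\<bar> \<le> 2"
proof -
  obtain r where r: "\<bar>real c - a * fib (Suc r) - b * fib r\<bar> < fib (r + 2)"
    and ab: "\<bar>a - \<phi> * b\<bar> \<le> 2 * \<phi>" using assms unfolding viable_def by auto
  have phi_pos: "0 < \<phi>" using one_less_phi by simp
  have b_near: "\<bar>b - a / \<phi>\<bar> \<le> 2"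
  proof -
    have "\<bar>b - a / \<phi>\<bar> = \<bar>a - \<phi> * b\<bar> / \<phi>" using phi_pos by (simp add: field_simps abs_minus_commute)
    with ab phi_pos show ?thesis by (simp add: divide_le_eq)
  qed
  have "\<phi> ^ r = fib (Suc r) + fib r / \<phi>"
    using phi_power_Suc[of r] phi_pos by (simp add: field_simps)
  then have "c - a * \<phi> ^ r = (c - a * fib (Suc r) - b * fib r) + (b - a / \<phi>) * fib r"
    by (simp add: algebra_simps)
  moreover have "\<bar>(b - a / \<phi>) * fib r\<bar> \<le> 2 * fib r" using b_near by (simp add: abs_mult mult_right_mono)
  ultimately have "\<bar>c - a * \<phi> ^ r\<bar> < fib (r + 2) + 2 * fib r" using r by linarith
  also have "\<dots> \<le> 3 * fib (Suc (Suc r))" using fib_mono[of r "r + 2"] by simp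
  also have "\<dots> \<le> 3 * \<phi> * \<phi> ^ r" using fib_Suc_le_phi_power[of "Suc r"] by simp
  also have "\<dots> < 5 * \<phi> ^ r" using phi_less_5_3 phi_pos by simp
  finally have "\<bar>c / \<phi> ^ r - a\<bar> < 5" using phi_pos by (simp add: abs_less_iff field_simps)
  with b_near show ?thesis by blast
qed

lemma viable_subset:
  assumes R: "real c \<le> \<phi> ^ R"
  shows "viable c \<subseteq> (\<lambda>(r, i, j). let a = \<lfloor>c / \<phi> ^ r\<rfloor> + i in (a, \<lfloor>a / \<phi>\<rfloor> + j))
           ` ({..R} \<times> {-5..6} \<times> {-2..2})"
proof
  fix p assume "p \<in> viable c"
  moreover obtain a b where p: "p = (a, b)" by fastforce
  ultimately obtain r where r: "\<bar>c / \<phi> ^ r - a\<bar> < 5" and b: "\<bar>b - a / \<phi>\<bar> \<le> 2"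
    using viable_near_line by blast
  define r' where "r' = min r R"
  have r': "\<bar>c / \<phi> ^ r' - a\<bar> < 6"
  proof (cases "r \<le> R")
    case False
    then have "\<phi> ^ R \<le> \<phi> ^ r" using one_less_phi by (intro power_increasing) auto
    with R have "real c \<le> \<phi> ^ r" by linarith
    with R have "c / \<phi> ^ r \<le> 1" "c / \<phi> ^ R \<le> 1" using one_less_phi by (simp_all add: field_simps)
    moreover have "0 \<le> c / \<phi> ^ r" "0 \<le> c / \<phi> ^ R" using one_less_phi by simp_all
    ultimately show ?thesis using r False by (simp add: r'_def)
  qed (use r r'_def in simp)
  have "a - \<lfloor>c / \<phi> ^ r'\<rfloor> \<in> {-5..6}" using r' by (simp, linarith)
  moreover have "b - \<lfloor>a / \<phi>\<rfloor> \<in> {-2..2}" using b by (simp, linarith)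
  moreover have "r' \<in> {..R}" by (simp add: r'_def)
  ultimately show "p \<in> (\<lambda>(r, i, j). let a = \<lfloor>c / \<phi> ^ r\<rfloor> + i in (a, \<lfloor>a / \<phi>\<rfloor> + j))
           ` ({..R} \<times> {-5..6} \<times> {-2..2})"
    unfolding p by (intro rev_image_eqI[of "(r', a - \<lfloor>c / \<phi> ^ r'\<rfloor>, b - \<lfloor>a / \<phi>\<rfloor>)"]) auto
qed

lemma card_viable_le:
  assumes "real c \<le> \<phi> ^ R"
  shows "finite (viable c)" "card (viable c) \<le> 60 * (R + 1)"
proof -
  let ?D = "{..R} \<times> {-5..6::int} \<times> {-2..2::int}"
  have "finite ?D" by simp
  then show "finite (viable c)" using viable_subset[OF assms] by (rule finite_surj)
  have "card (viable c) \<le> card ?D"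
    using \<open>finite ?D\<close> viable_subset[OF assms] by (rule surj_card_le)
  also have "card ?D = 60 * (R + 1)" by (simp add: card_cartesian_product)
  finally show "card (viable c) \<le> 60 * (R + 1)" .
qed

lemma obtain_phi_power_ge:
  obtains R :: nat where "real c \<le> \<phi> ^ R" "real R \<le> log \<phi> (real (max c 1)) + 1"
proof
  let ?m = "real (max c 1)"
  define R where "R = nat \<lceil>log \<phi> ?m\<rceil>"
  have log_nonneg: "0 \<le> log \<phi> ?m" using one_less_phi by simp
  then have R: "real R = real_of_int \<lceil>log \<phi> ?m\<rceil>" unfolding R_def by simp
  then show "real R \<le> log \<phi> ?m + 1" by linarith
  have "real c \<le> ?m" by simp
  also have "\<dots> = \<phi> powr log \<phi> ?m" using one_less_phi by simp
  also have "\<dots> \<le> \<phi> powr R" using one_less_phi R by (intro powr_mono) auto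
  also have "\<dots> = \<phi> ^ R" using one_less_phi by (simp add: powr_realpow)
  finally show "real c \<le> \<phi> ^ R" .
qed

lemma card_viable_le_ln:
  "real (card (viable c)) \<le> (60 / ln \<phi> + 120) * max 1 (ln (real (max c 1)))"
proof -
  obtain R where R: "real c \<le> \<phi> ^ R" "real R \<le> log \<phi> (real (max c 1)) + 1"
    by (rule obtain_phi_power_ge)
  let ?L = "max 1 (ln (real (max c 1)))"
  have ln_phi: "0 < ln \<phi>" using one_less_phi by simp
  have "real (card (viable c)) \<le> 60 * (real R + 1)"
    using of_nat_mono[OF card_viable_le(2)[OF R(1)], where 'a=real] by simp
  also have "\<dots> \<le> 60 / ln \<phi> * ln (real (max c 1)) + 120"
    using R(2) by (simp add: log_def)
  also have "\<dots> \<le> (60 / ln \<phi> + 120) * ?L"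
  proof -
    have "60 / ln \<phi> * ln (real (max c 1)) \<le> 60 / ln \<phi> * ?L" using ln_phi by (intro mult_left_mono) auto
    moreover have "120 \<le> 120 * ?L" by simp
    ultimately show ?thesis unfolding distrib_right by linarith
  qed
  finally show ?thesis .
qed

definition diff_state :: "bool list \<Rightarrow> bool list \<Rightarrow> int \<times> int" where
  "diff_state x y = (int (fibval y) - int (fibval x), int (fibval_shift y) - int (fibval_shift x))"

definition diff_step :: "int \<times> int \<Rightarrow> bool \<times> bool \<Rightarrow> int \<times> int" where
  "diff_step p e = (let d = of_bool (snd e) - of_bool (fst e) in (fst p + snd p + d, fst p + d))"

lemma foldl_diff_step:
  "length x = length y \<Longrightarrow> foldl diff_step (diff_state u v) (zip x y) = diff_state (u @ x) (v @ y)"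
proof (induction x y arbitrary: u v rule: list_induct2)
  case (Cons e x f y)
  have "diff_step (diff_state u v) (e, f) = diff_state (u @ [e]) (v @ [f])"
    by (simp add: diff_step_def diff_state_def fibval_snoc fibval_shift_snoc)
  with Cons.IH[of "u @ [e]" "v @ [f]"] show ?case by simp
qed simp

lemma diff_state_viable:
  assumes "valid_fib x" "valid_fib y" "length x = length y" "fibval x + c = fibval y"
    and "i \<le> length x"
  shows "diff_state (take i x) (take i y) \<in> viable c"
proof -
  define u v r where "u = take i x" and "v = take i y" and "r = length x - i"
  have x: "x = u @ drop i x" and y: "y = v @ drop i y" and r: "length (drop i x) = r" "length (drop i y) = r"
    using assms(3) by (simp_all add: u_def v_def r_def)
  have tails: "fibval (drop i x) < fib (r + 2)" "fibval (drop i y) < fib (r + 2)"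
    using fibval_less_fib[OF valid_fib_drop] assms(1,2) r by metis+
  obtain a b where ab: "diff_state u v = (a, b)" by fastforce
  then have a: "a = real (fibval v) - real (fibval u)" and b: "b = real (fibval_shift v) - real (fibval_shift u)"
    by (auto simp: diff_state_def)
  have "real c = real (fibval y) - real (fibval x)" using assms(4) by simp
  also have "\<dots> = a * fib (Suc r) + b * fib r + (real (fibval (drop i y)) - real (fibval (drop i x)))"
    using x y r fibval_append[of u "drop i x"] fibval_append[of v "drop i y"]
    by (simp add: a b algebra_simps)
  finally have "\<bar>real c - a * fib (Suc r) - b * fib r\<bar> < fib (r + 2)"
    using tails by simp
  moreover have "\<bar>a - \<phi> * b\<bar> \<le> 2 * \<phi>"
    using abs_fibval_minus_phi_shift_le[of u] abs_fibval_minus_phi_shift_le[of v]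
    unfolding a b right_diff_distrib by linarith
  ultimately show ?thesis unfolding viable_def u_def[symmetric] v_def[symmetric] ab by blast
qed

lemma finite_viable: "finite (viable c)"
  using obtain_phi_power_ge card_viable_le(1) by metis

definition offset_delta :: "nat \<Rightarrow> int \<times> int \<Rightarrow> bool \<times> bool \<Rightarrow> (int \<times> int) option" where
  "offset_delta c = guarded_step diff_step (viable c)"

definition offset_final :: "nat \<Rightarrow> (int \<times> int) set" where
  "offset_final c = {p \<in> viable c. fst p = int c}"

lemma is_dfa_offset: "is_dfa (viable c) (0, 0) (offset_delta c) (offset_final c)"
  unfolding offset_delta_def offset_final_def
  using finite_viable zero_viable by (intro is_dfa_guarded_step) auto

lemma dfa_accepts_offset:
  assumes "length x = length y" "valid_fib x" "valid_fib y"
  shows "dfa_accepts (offset_delta c) (0, 0) (offset_final c) (zip x y) \<longleftrightarrow> fibval x + c = fibval y"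
proof -
  have states: "foldl diff_step (0, 0) (take i (zip x y)) = diff_state (take i x) (take i y)" for i
    using assms(1) foldl_diff_step[of "take i x" "take i y" "[]" "[]"]
    by (simp add: diff_state_def take_zip)
  have "dfa_accepts (offset_delta c) (0, 0) (offset_final c) (zip x y) \<longleftrightarrow>
    (\<forall>i \<le> length x. diff_state (take i x) (take i y) \<in> viable c) \<and> fst (diff_state x y) = int c"
    using dfa_run_guarded_step[OF zero_viable, where f = diff_step and w = "zip x y"]
      states[of "length x"] assms(1)
    by (auto simp: dfa_accepts_def offset_delta_def offset_final_def states)
      (metis assms(1) order_refl prod.collapse take_all)
  also have "\<dots> \<longleftrightarrow> fibval x + c = fibval y"
    using diff_state_viable[OF assms(2,3,1)] by (auto simp: diff_state_def)
  finally show ?thesis .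
qed

theorem theorem5:
  shows "\<exists>K::real. \<forall>c::nat. \<exists>(Q::nat set) q0 (\<delta>::nat \<Rightarrow> bool \<times> bool \<Rightarrow> nat option) F.
    is_dfa Q q0 \<delta> F \<and>
    real (card Q) \<le> K * max 1 (ln (real (max c 1))) \<and>
    (\<forall>x y. length x = length y \<longrightarrow> valid_fib x \<longrightarrow> valid_fib y \<longrightarrow>
       (dfa_accepts \<delta> q0 F (zip x y) \<longleftrightarrow> fibval x + c = fibval y))"
proof (rule exI[of _ "60 / ln \<phi> + 120"], rule allI, goal_cases)
  case (1 c)
  obtain Q q0 and \<delta> :: "nat \<Rightarrow> bool \<times> bool \<Rightarrow> nat option" and F
    where "is_dfa Q q0 \<delta> F" "card Q = card (viable c)"
      "dfa_accepts \<delta> q0 F = dfa_accepts (offset_delta c) (0, 0) (offset_final c)"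
    using ex_nat_dfa[OF is_dfa_offset] by blast
  then show ?case
    using card_viable_le_ln[of c] dfa_accepts_offset
    by (intro exI[of _ Q] exI[of _ q0] exI[of _ \<delta>] exI[of _ F]) auto
qed

end
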